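(* Let $\beta,\lambda>0$, let $K_-\le K_+$ be integers, and let $f(x)=\sum_{k=K_-}^{K_+}c_ke^{-\lambda(x-\beta k)^2}$ with $c_k\in\mathbb C$, $c_{K_-}\neq0$, $c_{K_+}\neq0$. Let $\Gamma\subset\mathbb R$ be a set of $2(K_+-K_-)+1$ distinct points. Then $f$ is determined, up to a unimodular constant and conjugation, by the phaseless samples $|f(\gamma)|$ and $|f'(\gamma)|$, $\gamma\in\Gamma$: that is, if $g(x)=\sum_{k=K_-}^{K_+}d_ke^{-\lambda(x-\beta k)^2}$ with $d_k\in\mathbb C$ satisfies $|g(\gamma)|=|f(\gamma)|$ and $|g'(\gamma)|=|f'(\gamma)|$ for all $\gamma\in\Gamma$, then there is $z\in\mathbb C$, $|z|=1$, with $g=zf$ or $g=z\overline f$.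
   Context: Here $K_-=\min\{k: c_k\neq0\}$ and $K_+=\max\{k:c_k\neq0\}$, i.e. $f$ is a function of finite duration in the Gaussian shift-invariant space $\{\sum_{k\in\mathbb Z}c_ke^{-\lambda(\cdot-\beta k)^2}: \{c_k\}\in\ell^\infty(\mathbb Z)\}$. *)

theory Defs
  imports "HOL-Analysis.Analysis"
begin

definition gauss_sum :: "real \<Rightarrow> real \<Rightarrow> int \<Rightarrow> int \<Rightarrow> (int \<Rightarrow> complex) \<Rightarrow> real \<Rightarrow> complex" where
  "gauss_sum beta lam Km Kp c x =
     (\<Sum>k=Km..Kp. c k * complex_of_real (exp (- lam * (x - beta * real_of_int k)^2)))"

end

theory Submission
  imports Defs "HOL-Computational_Algebra.Polynomial"
begin

text \<open>With t = exp (2 lam beta x) one has f x = E x * P t and g x = E x * Q t for a positive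
  weight E and polynomials P, Q of degree N = Kp - Km, and f' x = E x * (u * P t + w * P' t)
  with u, w real, w \<noteq> 0. Write P* for the polynomial with conjugated coefficients. The samples
  of |f| give |P|^2 at 2N + 1 real points, hence the polynomial P P*. Since
  (P P*)' = 2 Re (P conj P') on the reals, the samples of |f'| then give |P'|^2 at the same
  points, hence P' P'*. Now B = P' P* satisfies B + B* = (P P*)' and B B* = (P' P'*) (P P*),
  so B is determined up to conjugation; replacing P by P* if necessary, Q' Q* = P' P* and
  Q Q* = P P* make the Wronskian Q' P - P' Q vanish, which forces Q = z P with |z| = 1.\<close>

definition pcnj :: "complex poly \<Rightarrow> complex poly" where
  "pcnj p = map_poly cnj p"

lemma poly_pcnj [simp]: "poly (pcnj p) x = cnj (poly p (cnj x))"
  by (simp add: pcnj_def)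

lemma pcnj_mult [simp]: "pcnj (p * q) = pcnj p * pcnj q"
  and pcnj_smult [simp]: "pcnj (smult a p) = smult (cnj a) (pcnj p)"
  and pcnj_pcnj [simp]: "pcnj (pcnj p) = p"
  by (auto simp: poly_eq_poly_eq_iff[symmetric] fun_eq_iff)

lemma pderiv_pcnj: "pderiv (pcnj p) = pcnj (pderiv p)"
  by (auto simp: poly_eq_iff coeff_pderiv pcnj_def coeff_map_poly)

lemma pcnj_eq_0_iff [simp]: "pcnj p = 0 \<longleftrightarrow> p = 0"
  by (simp add: pcnj_def map_poly_eq_0_iff)

lemma degree_pcnj [simp]: "degree (pcnj p) = degree p"
  by (simp add: pcnj_def degree_map_poly)

lemma eq_smult_if_pderiv_mult_eq:
  fixes Q R :: "'a::field_char_0 poly"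
  assumes QR: "pderiv Q * R = pderiv R * Q" and "R \<noteq> 0"
  shows "\<exists>z. Q = smult z R"
proof -
  obtain t where t: "poly R t \<noteq> 0"
    using \<open>R \<noteq> 0\<close> poly_all_0_iff_0 by blast
  define S where "S = Q - smult (poly Q t / poly R t) R"
  have "poly S t = 0"
    using t by (simp add: S_def)
  have SR: "pderiv S * R = pderiv R * S"
    using QR by (simp add: S_def pderiv_diff pderiv_smult algebra_simps)
  have "S = 0"
  proof (rule ccontr)
    assume "S \<noteq> 0"
    have "pderiv S \<noteq> 0"
    proof
      assume "pderiv S = 0"
      then obtain a where "S = [:a:]"
        using degree_eq_zeroE pderiv_eq_0_iff by blast
      then show False
        using \<open>S \<noteq> 0\<close> \<open>poly S t = 0\<close> by simp
    qed
    then have "pderiv S * R \<noteq> 0"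
      using \<open>R \<noteq> 0\<close> by simp
    have "order t (pderiv S * R) = order t (pderiv S)"
      using \<open>pderiv S * R \<noteq> 0\<close> t by (simp add: order_mult order_0I)
    also have "\<dots> < order t S"
      using order_pderiv[OF \<open>S \<noteq> 0\<close> \<open>poly S t = 0\<close>] by simp
    also have "\<dots> \<le> order t (pderiv R * S)"
      using \<open>pderiv S * R \<noteq> 0\<close> SR by (simp add: order_mult)
    finally show False
      using SR by simp
  qed
  then show ?thesis
    by (auto simp: S_def)
qed

lemma unimodular_smult_if_pderiv_mult_pcnj_eq:
  assumes "R \<noteq> 0" and sq: "R * pcnj R = Q * pcnj Q"
    and deriv: "pderiv Q * pcnj Q = pderiv R * pcnj R"
  shows "\<exists>z. cmod z = 1 \<and> Q = smult z R"
proof -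
  have "R * pcnj R \<noteq> 0"
    using \<open>R \<noteq> 0\<close> by simp
  then have "pcnj Q \<noteq> 0"
    using sq by auto
  have "pcnj Q * (pderiv Q * R - pderiv R * Q) = (pderiv Q * pcnj Q) * R - pderiv R * (Q * pcnj Q)"
    by (simp add: algebra_simps)
  also have "\<dots> = 0"
    using sq deriv by (simp add: algebra_simps)
  finally have "pderiv Q * R = pderiv R * Q"
    using \<open>pcnj Q \<noteq> 0\<close> by simp
  then obtain z where z: "Q = smult z R"
    using eq_smult_if_pderiv_mult_eq \<open>R \<noteq> 0\<close> by blast
  have "smult (z * cnj z - 1) (R * pcnj R) = Q * pcnj Q - R * pcnj R"
    by (simp add: z smult_diff_left mult.commute)
  then have "z * cnj z = 1"
    using sq \<open>R * pcnj R \<noteq> 0\<close> by simp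
  then have "(cmod z)\<^sup>2 = 1"
    using complex_norm_square[of z] by (metis of_real_eq_1_iff of_real_power)
  then have "cmod z = 1"
    using norm_ge_zero[of z] by (auto simp: power2_eq_1_iff)
  with z show ?thesis
    by blast
qed

lemma phase_retrieval_poly:
  assumes "P \<noteq> 0" and sq: "P * pcnj P = Q * pcnj Q"
    and deriv_sq: "pderiv P * pcnj (pderiv P) = pderiv Q * pcnj (pderiv Q)"
  shows "\<exists>z. cmod z = 1 \<and> (Q = smult z P \<or> Q = smult z (pcnj P))"
proof -
  define B where "B = pderiv P * pcnj P"
  define C where "C = pderiv Q * pcnj Q"
  have sum: "C + pcnj C = B + pcnj B"
    using arg_cong[OF sq, of pderiv]
    by (simp add: B_def C_def pderiv_mult pderiv_pcnj algebra_simps)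
  have prod: "C * pcnj C = B * pcnj B"
  proof -
    have "C * pcnj C = (pderiv Q * pcnj (pderiv Q)) * (Q * pcnj Q)"
      by (simp add: C_def pderiv_pcnj algebra_simps)
    also have "\<dots> = (pderiv P * pcnj (pderiv P)) * (P * pcnj P)"
      using sq deriv_sq by simp
    also have "\<dots> = B * pcnj B"
      by (simp add: B_def pderiv_pcnj algebra_simps)
    finally show ?thesis .
  qed
  \<comment> \<open>C is a root of X^2 - (B + pcnj B) X + B pcnj B = (X - B) (X - pcnj B)\<close>
  have "(C - B) * (C - pcnj B) = C * C - C * (B + pcnj B) + B * pcnj B"
    by (simp add: algebra_simps)
  also have "\<dots> = C * C - C * (C + pcnj C) + C * pcnj C"
    using sum prod by simp
  also have "\<dots> = 0"
    by (simp add: algebra_simps)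
  finally consider "C = B" | "C = pcnj B"
    by auto
  then show ?thesis
  proof cases
    case 1
    then show ?thesis
      using unimodular_smult_if_pderiv_mult_pcnj_eq[OF \<open>P \<noteq> 0\<close> sq]
      by (auto simp: B_def C_def)
  next
    case 2
    have "pcnj P * pcnj (pcnj P) = Q * pcnj Q"
      using sq by (simp add: mult.commute)
    moreover have "pderiv Q * pcnj Q = pderiv (pcnj P) * pcnj (pcnj P)"
      using 2 by (simp add: B_def C_def pderiv_pcnj)
    ultimately show ?thesis
      using unimodular_smult_if_pderiv_mult_pcnj_eq[of "pcnj P" Q] \<open>P \<noteq> 0\<close> by auto
  qed
qed

lemma poly_mult_pcnj_of_real:
  "poly (p * pcnj p) (of_real t) = of_real ((cmod (poly p (of_real t)))\<^sup>2)"
  using complex_norm_square[of "poly p (of_real t)"] by simp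

lemma poly_pderiv_mult_pcnj_of_real:
  "poly (pderiv (p * pcnj p)) (of_real t)
     = of_real (2 * Re (poly p (of_real t) * cnj (poly (pderiv p) (of_real t))))"
  by (simp add: pderiv_mult pderiv_pcnj complex_eq_iff)

lemma norm_eq_if_norm_combination_eq:
  fixes a b a' b' :: complex and u w :: real
  assumes "cmod a = cmod a'" and "Re (a * cnj b) = Re (a' * cnj b')" and "w \<noteq> 0"
    and "cmod (of_real u * a + of_real w * b) = cmod (of_real u * a' + of_real w * b')"
  shows "cmod b = cmod b'"
proof -
  have expand: "(cmod (of_real u * x + of_real w * y))\<^sup>2
      = u\<^sup>2 * (cmod x)\<^sup>2 + 2 * u * w * Re (x * cnj y) + w\<^sup>2 * (cmod y)\<^sup>2" for x y
    unfolding cmod_power2 by (simp add: power2_eq_square algebra_simps)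
  have "w\<^sup>2 * (cmod b)\<^sup>2 = w\<^sup>2 * (cmod b')\<^sup>2"
    using assms expand[of a b] expand[of a' b'] by simp
  then show ?thesis
    using \<open>w \<noteq> 0\<close> by (simp add: power2_eq_iff_nonneg)
qed

lemma mult_pcnj_eq_if_norm_eq_on:
  assumes "finite S" and "2 * n < card S" and "degree P \<le> n" and "degree Q \<le> n"
    and "\<forall>t\<in>S. cmod (poly P (of_real t)) = cmod (poly Q (of_real t))"
  shows "P * pcnj P = Q * pcnj Q"
proof (rule poly_eqI_degree[of "of_real ` S"])
  have "card (of_real ` S :: complex set) = card S"
    by (intro card_image inj_onI) simp
  moreover have "degree (p * pcnj p) \<le> 2 * n" if "degree p \<le> n" for p
    using degree_mult_le[of p "pcnj p"] that by simp
  ultimately show "degree (P * pcnj P) < card (of_real ` S :: complex set)"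
    and "degree (Q * pcnj Q) < card (of_real ` S :: complex set)"
    using assms by (metis le_less_trans)+
qed (use assms(5) in \<open>auto simp del: poly_mult poly_pcnj simp: poly_mult_pcnj_of_real\<close>)

lemma pderiv_mult_pcnj_eq_if_norm_eq_on:
  assumes "finite S" and "2 * n < card S" and "degree P \<le> n" and "degree Q \<le> n"
    and sq: "P * pcnj P = Q * pcnj Q"
    and "\<forall>t\<in>S. \<exists>u w :: real. w \<noteq> 0 \<and>
           cmod (of_real u * poly P (of_real t) + of_real w * poly (pderiv P) (of_real t))
           = cmod (of_real u * poly Q (of_real t) + of_real w * poly (pderiv Q) (of_real t))"
  shows "pderiv P * pcnj (pderiv P) = pderiv Q * pcnj (pderiv Q)"
proof (rule mult_pcnj_eq_if_norm_eq_on[OF assms(1,2)])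
  show "degree (pderiv P) \<le> n" and "degree (pderiv Q) \<le> n"
    using assms(3,4) by (simp_all add: degree_pderiv)
  show "\<forall>t\<in>S. cmod (poly (pderiv P) (of_real t)) = cmod (poly (pderiv Q) (of_real t))"
  proof
    fix t assume "t \<in> S"
    have "cmod (poly P (of_real t)) = cmod (poly Q (of_real t))"
      using arg_cong[OF sq, of "\<lambda>p. poly p (of_real t)"]
      by (simp only: poly_mult_pcnj_of_real of_real_eq_iff power2_eq_iff_nonneg norm_ge_zero)
    moreover have "Re (poly P (of_real t) * cnj (poly (pderiv P) (of_real t)))
        = Re (poly Q (of_real t) * cnj (poly (pderiv Q) (of_real t)))"
      using arg_cong[OF sq, of "\<lambda>p. poly (pderiv p) (of_real t)"]
      by (simp only: poly_pderiv_mult_pcnj_of_real of_real_eq_iff)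
    ultimately show "cmod (poly (pderiv P) (of_real t)) = cmod (poly (pderiv Q) (of_real t))"
      using assms(6) \<open>t \<in> S\<close> norm_eq_if_norm_combination_eq by blast
  qed
qed

definition gauss_coeff :: "real \<Rightarrow> real \<Rightarrow> (int \<Rightarrow> complex) \<Rightarrow> int \<Rightarrow> complex" where
  "gauss_coeff beta lam c k = c k * of_real (exp (- lam * (beta * of_int k)\<^sup>2))"

definition gauss_poly :: "real \<Rightarrow> real \<Rightarrow> int \<Rightarrow> int \<Rightarrow> (int \<Rightarrow> complex) \<Rightarrow> complex poly" where
  "gauss_poly beta lam Km Kp c = (\<Sum>j\<le>nat (Kp - Km). monom (gauss_coeff beta lam c (Km + int j)) j)"

definition gauss_envelope :: "real \<Rightarrow> real \<Rightarrow> int \<Rightarrow> real \<Rightarrow> real" where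
  "gauss_envelope beta lam Km x = exp (- lam * x\<^sup>2 + 2 * lam * beta * of_int Km * x)"

definition gauss_var :: "real \<Rightarrow> real \<Rightarrow> real \<Rightarrow> real" where
  "gauss_var beta lam x = exp (2 * lam * beta * x)"

lemma degree_gauss_poly: "degree (gauss_poly beta lam Km Kp c) \<le> nat (Kp - Km)"
  unfolding gauss_poly_def by (rule degree_sum_le) (auto intro: order.trans[OF degree_monom_le])

lemma coeff_0_gauss_poly: "coeff (gauss_poly beta lam Km Kp c) 0 = gauss_coeff beta lam c Km"
  by (simp add: gauss_poly_def coeff_sum coeff_monom)

lemma gauss_coeff_eq_0_iff: "gauss_coeff beta lam c k = 0 \<longleftrightarrow> c k = 0"
  by (simp add: gauss_coeff_def)

lemma inj_gauss_var: "beta \<noteq> 0 \<Longrightarrow> lam \<noteq> 0 \<Longrightarrow> inj (gauss_var beta lam)"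
  by (auto intro: injI simp: gauss_var_def)

lemma norm_mult_gauss_envelope:
  "cmod (of_real (gauss_envelope beta lam Km x) * y) = cmod (of_real (gauss_envelope beta lam Km x) * y')
    \<longleftrightarrow> cmod y = cmod y'"
  by (simp add: norm_mult gauss_envelope_def)

lemma gauss_sum_eq_poly:
  assumes "Km \<le> Kp"
  shows "gauss_sum beta lam Km Kp c x =
    of_real (gauss_envelope beta lam Km x)
      * poly (gauss_poly beta lam Km Kp c) (of_real (gauss_var beta lam x))"
proof -
  define E where "E = gauss_envelope beta lam Km x"
  define t where "t = gauss_var beta lam x"
  have "c k * of_real (exp (- lam * (x - beta * of_int k)\<^sup>2))
      = of_real E * (gauss_coeff beta lam c k * of_real t ^ nat (k - Km))" if "Km \<le> k" for k
  proof -
    have "exp (- lam * (x - beta * of_int k)\<^sup>2)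
        = E * t ^ nat (k - Km) * exp (- lam * (beta * of_int k)\<^sup>2)"
      using that by (simp add: E_def t_def gauss_envelope_def gauss_var_def exp_add[symmetric]
          exp_of_nat_mult[symmetric] power2_eq_square algebra_simps)
    then show ?thesis
      by (simp only: gauss_coeff_def of_real_mult of_real_power mult_ac)
  qed
  then have "gauss_sum beta lam Km Kp c x
      = (\<Sum>k=Km..Kp. of_real E * (gauss_coeff beta lam c k * of_real t ^ nat (k - Km)))"
    unfolding gauss_sum_def by (intro sum.cong) simp_all
  also have "\<dots>
      = (\<Sum>j\<le>nat (Kp - Km). of_real E * (gauss_coeff beta lam c (Km + int j) * of_real t ^ j))"
    by (rule sum.reindex_bij_witness[of _ "\<lambda>j. Km + int j" "\<lambda>k. nat (k - Km)"]) (use assms in auto)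
  also have "\<dots> = of_real E * poly (gauss_poly beta lam Km Kp c) (of_real t)"
    by (simp add: gauss_poly_def poly_sum poly_monom sum_distrib_left)
  finally show ?thesis
    unfolding E_def t_def .
qed

lemma vector_derivative_gauss_sum:
  fixes beta lam x :: real and Km Kp :: int and c :: "int \<Rightarrow> complex"
  defines "P \<equiv> gauss_poly beta lam Km Kp c" and "t \<equiv> gauss_var beta lam x"
  assumes "Km \<le> Kp"
  shows "vector_derivative (gauss_sum beta lam Km Kp c) (at x) =
    of_real (gauss_envelope beta lam Km x)
      * (of_real (2 * lam * (beta * of_int Km - x)) * poly P (of_real t)
         + of_real (2 * lam * beta * t) * poly (pderiv P) (of_real t))"
proof -
  define E where "E = gauss_envelope beta lam Km"
  define T where "T = gauss_var beta lam"
  have f: "gauss_sum beta lam Km Kp c = (\<lambda>x. of_real (E x) * poly P (of_real (T x)))"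
    using gauss_sum_eq_poly[OF assms(3)] by (simp add: fun_eq_iff E_def T_def P_def)
  have dE: "(E has_real_derivative E x * (2 * lam * (beta * of_int Km - x))) (at x)"
    unfolding E_def gauss_envelope_def by (auto intro!: derivative_eq_intros simp: algebra_simps)
  have dT: "(T has_real_derivative 2 * lam * beta * T x) (at x)"
    unfolding T_def gauss_var_def by (auto intro!: derivative_eq_intros)
  have dPT: "((\<lambda>x. poly P (of_real (T x))) has_vector_derivative
      of_real (2 * lam * beta * T x) * poly (pderiv P) (of_real (T x))) (at x)"
    using field_vector_diff_chain_at[OF has_vector_derivative_of_real[OF dT] poly_DERIV[of P]]
    by (simp add: o_def)
  show ?thesis
    unfolding f
    by (rule vector_derivative_at[OF has_vector_derivative_mult[OF has_vector_derivative_of_real[OF dE]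
          dPT], THEN trans]) (simp add: E_def T_def t_def algebra_simps)
qed

lemma gauss_poly_mult_pcnj_eq_if_phaseless_samples_eq:
  fixes beta lam :: real and Km Kp :: int and c d :: "int \<Rightarrow> complex" and \<Gamma> :: "real set"
  defines "P \<equiv> gauss_poly beta lam Km Kp c" and "Q \<equiv> gauss_poly beta lam Km Kp d"
  assumes "beta \<noteq> 0" and "lam \<noteq> 0" and "Km \<le> Kp"
    and "finite \<Gamma>" and "2 * nat (Kp - Km) < card \<Gamma>"
    and samples: "\<forall>\<gamma>\<in>\<Gamma>. cmod (gauss_sum beta lam Km Kp d \<gamma>) = cmod (gauss_sum beta lam Km Kp c \<gamma>)"
    and deriv_samples: "\<forall>\<gamma>\<in>\<Gamma>. cmod (vector_derivative (gauss_sum beta lam Km Kp d) (at \<gamma>))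
                            = cmod (vector_derivative (gauss_sum beta lam Km Kp c) (at \<gamma>))"
  shows "P * pcnj P = Q * pcnj Q"
    and "pderiv P * pcnj (pderiv P) = pderiv Q * pcnj (pderiv Q)"
proof -
  define T where "T = gauss_var beta lam"
  have "finite (T ` \<Gamma>)"
    using assms(6) by simp
  have card: "2 * nat (Kp - Km) < card (T ` \<Gamma>)"
    using assms(7) inj_gauss_var[OF assms(3,4)] by (simp add: T_def card_image inj_on_subset)
  show sq: "P * pcnj P = Q * pcnj Q"
  proof (rule mult_pcnj_eq_if_norm_eq_on[OF \<open>finite (T ` \<Gamma>)\<close> card])
    show "\<forall>t\<in>T ` \<Gamma>. cmod (poly P (of_real t)) = cmod (poly Q (of_real t))"
      using samples
      by (simp add: gauss_sum_eq_poly[OF assms(5)] norm_mult_gauss_envelope T_def P_def Q_def)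
  qed (simp_all add: P_def Q_def degree_gauss_poly)
  show "pderiv P * pcnj (pderiv P) = pderiv Q * pcnj (pderiv Q)"
  proof (rule pderiv_mult_pcnj_eq_if_norm_eq_on[OF \<open>finite (T ` \<Gamma>)\<close> card _ _ sq])
    show "\<forall>t\<in>T ` \<Gamma>. \<exists>u w :: real. w \<noteq> 0 \<and>
           cmod (of_real u * poly P (of_real t) + of_real w * poly (pderiv P) (of_real t))
           = cmod (of_real u * poly Q (of_real t) + of_real w * poly (pderiv Q) (of_real t))"
    proof
      fix t assume "t \<in> T ` \<Gamma>"
      then obtain \<gamma> where "\<gamma> \<in> \<Gamma>" and t: "t = T \<gamma>"
        by blast
      have "2 * lam * beta * t \<noteq> 0"
        using assms(3,4) by (simp add: t T_def gauss_var_def)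
      moreover have "cmod (of_real (2 * lam * (beta * of_int Km - \<gamma>)) * poly P (of_real t)
            + of_real (2 * lam * beta * t) * poly (pderiv P) (of_real t))
          = cmod (of_real (2 * lam * (beta * of_int Km - \<gamma>)) * poly Q (of_real t)
            + of_real (2 * lam * beta * t) * poly (pderiv Q) (of_real t))"
        using deriv_samples \<open>\<gamma> \<in> \<Gamma>\<close>
        by (simp add: vector_derivative_gauss_sum[OF assms(5)] norm_mult_gauss_envelope
            t T_def P_def Q_def)
      ultimately show "\<exists>u w :: real. w \<noteq> 0 \<and>
           cmod (of_real u * poly P (of_real t) + of_real w * poly (pderiv P) (of_real t))
           = cmod (of_real u * poly Q (of_real t) + of_real w * poly (pderiv Q) (of_real t))"
        by blast
    qed
  qed (simp_all add: P_def Q_def degree_gauss_poly)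
qed

theorem theorem4p1:
  fixes beta lam :: real and Km Kp :: int and c d :: "int \<Rightarrow> complex" and \<Gamma> :: "real set"
  assumes "beta > 0" and "lam > 0" and "Km \<le> Kp"
    and "c Km \<noteq> 0" and "c Kp \<noteq> 0"
    and "finite \<Gamma>" and "int (card \<Gamma>) = 2 * (Kp - Km) + 1"
    and "\<forall>\<gamma>\<in>\<Gamma>. cmod (gauss_sum beta lam Km Kp d \<gamma>) = cmod (gauss_sum beta lam Km Kp c \<gamma>)"
    and "\<forall>\<gamma>\<in>\<Gamma>. cmod (vector_derivative (gauss_sum beta lam Km Kp d) (at \<gamma>))
                 = cmod (vector_derivative (gauss_sum beta lam Km Kp c) (at \<gamma>))"
  shows "\<exists>z::complex. cmod z = 1 \<and>
           ((\<forall>x. gauss_sum beta lam Km Kp d x = z * gauss_sum beta lam Km Kp c x) \<or>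
            (\<forall>x. gauss_sum beta lam Km Kp d x = z * cnj (gauss_sum beta lam Km Kp c x)))"
proof -
  define P where "P = gauss_poly beta lam Km Kp c"
  define Q where "Q = gauss_poly beta lam Km Kp d"
  have "beta \<noteq> 0" and "lam \<noteq> 0"
    using assms(1,2) by simp_all
  moreover have "2 * nat (Kp - Km) < card \<Gamma>"
    using assms(3,7) by (simp flip: of_nat_less_iff[where 'a = int])
  ultimately have sq: "P * pcnj P = Q * pcnj Q"
    and deriv_sq: "pderiv P * pcnj (pderiv P) = pderiv Q * pcnj (pderiv Q)"
    using gauss_poly_mult_pcnj_eq_if_phaseless_samples_eq[OF _ _ assms(3,6) _ assms(8,9)]
    unfolding P_def Q_def by blast+
  \<comment> \<open>only c Km \<noteq> 0 is needed, to make P nonzero\<close>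
  have "P \<noteq> 0"
    using assms(4) coeff_0_gauss_poly[of beta lam Km Kp c] by (auto simp: P_def gauss_coeff_eq_0_iff)
  then obtain z where "cmod z = 1" and "Q = smult z P \<or> Q = smult z (pcnj P)"
    using phase_retrieval_poly[OF _ sq deriv_sq] by blast
  then show ?thesis
    by (auto simp: gauss_sum_eq_poly[OF assms(3)] P_def Q_def)
qed

end
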